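(* Let $X$ be a compact metric space and $f\colon X\to X$ a homeomorphism with the L-shadowing property. Then $f$ has the shadowing property and admits only finitely many chain recurrent classes.
   Context: A $\delta$-pseudo orbit is $(x_k)_{k\in\mathbb{Z}}$ with $d(f(x_k),x_{k+1})<\delta$ for all $k$; a two-sided limit pseudo orbit satisfies $d(f(x_k),x_{k+1})\to0$ as $|k|\to\infty$. $z$ $\varepsilon$-shadows $(x_k)$ if $d(f^k(z),x_k)<\varepsilon$ for all $k$, and two-sided limit shadows it if $d(f^k(z),x_k)\to0$ as $|k|\to\infty$. $f$ has the L-shadowing property if for every $\varepsilon>0$ there is $\delta>0$ such that every $\delta$-pseudo orbit that is also a two-sided limit pseudo orbit is both $\varepsilon$-shadowed and two-sided limit shadowed by one and the same point. $f$ has the shadowing property if for every $\varepsilon>0$ there is $\delta>0$ such that every $\delta$-pseudo orbit is $\varepsilon$-shadowed by some point. A point $x$ is chain recurrent if for each $\varepsilon>0$ there is a nontrivial finite $\varepsilon$-pseudo orbit from $x$ to $x$; the chain recurrent class of $x$ is the set of $y$ such that for every $\varepsilon>0$ some periodic $\varepsilon$-pseudo orbit contains both $x$ and $y$. *)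

theory Defs
  imports "HOL-Analysis.Analysis"
begin

definition pseudo_orbit :: "'a::metric_space set \<Rightarrow> ('a \<Rightarrow> 'a) \<Rightarrow> real \<Rightarrow> (int \<Rightarrow> 'a) \<Rightarrow> bool" where
  "pseudo_orbit X f \<delta> xs \<longleftrightarrow> (\<forall>k. xs k \<in> X) \<and> (\<forall>k. dist (f (xs k)) (xs (k+1)) < \<delta>)"

definition two_sided_limit_pseudo_orbit :: "'a::metric_space set \<Rightarrow> ('a \<Rightarrow> 'a) \<Rightarrow> (int \<Rightarrow> 'a) \<Rightarrow> bool" where
  "two_sided_limit_pseudo_orbit X f xs \<longleftrightarrow> (\<forall>k. xs k \<in> X) \<and>
     ((\<lambda>k. dist (f (xs k)) (xs (k+1))) \<longlongrightarrow> 0) at_top \<and>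
     ((\<lambda>k. dist (f (xs k)) (xs (k+1))) \<longlongrightarrow> 0) at_bot"

text \<open>Integer iterates of a homeomorphism f with inverse g.\<close>
definition iter_int :: "('a \<Rightarrow> 'a) \<Rightarrow> ('a \<Rightarrow> 'a) \<Rightarrow> int \<Rightarrow> 'a \<Rightarrow> 'a" where
  "iter_int f g k = (if k \<ge> 0 then (f ^^ nat k) else (g ^^ nat (- k)))"

definition eps_shadows :: "('a::metric_space \<Rightarrow> 'a) \<Rightarrow> ('a \<Rightarrow> 'a) \<Rightarrow> real \<Rightarrow> 'a \<Rightarrow> (int \<Rightarrow> 'a) \<Rightarrow> bool" where
  "eps_shadows f g \<epsilon> z xs \<longleftrightarrow> (\<forall>k. dist (iter_int f g k z) (xs k) < \<epsilon>)"

definition limit_shadows :: "('a::metric_space \<Rightarrow> 'a) \<Rightarrow> ('a \<Rightarrow> 'a) \<Rightarrow> 'a \<Rightarrow> (int \<Rightarrow> 'a) \<Rightarrow> bool" where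
  "limit_shadows f g z xs \<longleftrightarrow>
     ((\<lambda>k. dist (iter_int f g k z) (xs k)) \<longlongrightarrow> 0) at_top \<and>
     ((\<lambda>k. dist (iter_int f g k z) (xs k)) \<longlongrightarrow> 0) at_bot"

definition L_shadowing :: "'a::metric_space set \<Rightarrow> ('a \<Rightarrow> 'a) \<Rightarrow> ('a \<Rightarrow> 'a) \<Rightarrow> bool" where
  "L_shadowing X f g \<longleftrightarrow> (\<forall>\<epsilon>>0. \<exists>\<delta>>0. \<forall>xs.
     pseudo_orbit X f \<delta> xs \<and> two_sided_limit_pseudo_orbit X f xs \<longrightarrow>
     (\<exists>z\<in>X. eps_shadows f g \<epsilon> z xs \<and> limit_shadows f g z xs))"

definition shadowing :: "'a::metric_space set \<Rightarrow> ('a \<Rightarrow> 'a) \<Rightarrow> ('a \<Rightarrow> 'a) \<Rightarrow> bool" where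
  "shadowing X f g \<longleftrightarrow> (\<forall>\<epsilon>>0. \<exists>\<delta>>0. \<forall>xs.
     pseudo_orbit X f \<delta> xs \<longrightarrow> (\<exists>z\<in>X. eps_shadows f g \<epsilon> z xs))"

definition finite_pseudo_orbit :: "'a::metric_space set \<Rightarrow> ('a \<Rightarrow> 'a) \<Rightarrow> real \<Rightarrow> (nat \<Rightarrow> 'a) \<Rightarrow> nat \<Rightarrow> bool" where
  "finite_pseudo_orbit X f \<epsilon> p n \<longleftrightarrow> (\<forall>i\<le>n. p i \<in> X) \<and> (\<forall>i<n. dist (f (p i)) (p (Suc i)) < \<epsilon>)"

definition chain_recurrent :: "'a::metric_space set \<Rightarrow> ('a \<Rightarrow> 'a) \<Rightarrow> 'a \<Rightarrow> bool" where
  "chain_recurrent X f x \<longleftrightarrow> x \<in> X \<and> (\<forall>\<epsilon>>0. \<exists>p n. n > 0 \<and> finite_pseudo_orbit X f \<epsilon> p n \<and> p 0 = x \<and> p n = x)"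

definition periodic_pseudo_orbit :: "'a::metric_space set \<Rightarrow> ('a \<Rightarrow> 'a) \<Rightarrow> real \<Rightarrow> (int \<Rightarrow> 'a) \<Rightarrow> bool" where
  "periodic_pseudo_orbit X f \<epsilon> xs \<longleftrightarrow> pseudo_orbit X f \<epsilon> xs \<and> (\<exists>n::int>0. \<forall>k. xs (k + n) = xs k)"

definition chain_class :: "'a::metric_space set \<Rightarrow> ('a \<Rightarrow> 'a) \<Rightarrow> 'a \<Rightarrow> 'a set" where
  "chain_class X f x = {y \<in> X. \<forall>\<epsilon>>0. \<exists>xs. periodic_pseudo_orbit X f \<epsilon> xs \<and> x \<in> range xs \<and> y \<in> range xs}"

definition chain_recurrent_classes :: "'a::metric_space set \<Rightarrow> ('a \<Rightarrow> 'a) \<Rightarrow> 'a set set" where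
  "chain_recurrent_classes X f = chain_class X f ` {x. chain_recurrent X f x}"

end

theory Submission
  imports Defs
begin

(* L-shadowing implies shadowing: replacing a delta-pseudo orbit outside [-M, M] by true orbits
   gives a two-sided limit pseudo orbit, hence an (eps/2)-shadowing point for each M, and a limit
   point of these shadows the whole pseudo orbit by compactness.

   Finitely many classes: let delta come from L-shadowing. For chain recurrent x, y with
   dist x y < delta/2, concatenate ever finer chain loops at x towards the past and at y towards
   the future. The glued sequence is a delta-pseudo orbit with errors tending to 0 at both ends,
   so some orbit limit shadows it; that orbit comes close to x in the far past and to y in the far
   future, which yields arbitrarily fine chains from x to y. Hence the chain class is locally
   constant on the chain recurrent set, and a finite cover of X by small balls bounds the number
   of classes. *)

lemma iter_int_0 [simp]: "iter_int f g 0 = id"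
  unfolding iter_int_def by simp

lemma iter_int_in:
  assumes "homeomorphism X X f g" "w \<in> X"
  shows "iter_int f g k w \<in> X"
proof -
  have "f ` X \<subseteq> X" "g ` X \<subseteq> X"
    using assms(1) unfolding homeomorphism_def by auto
  then have "(f ^^ n) w \<in> X" "(g ^^ n) w \<in> X" for n
    using assms(2) by (induction n) auto
  then show ?thesis unfolding iter_int_def by simp
qed

lemma iter_int_Suc:
  assumes "homeomorphism X X f g" "w \<in> X"
  shows "iter_int f g (k + 1) w = f (iter_int f g k w)"
proof (cases "k \<ge> 0")
  case True
  then have "nat (k + 1) = Suc (nat k)" by simp
  with True show ?thesis unfolding iter_int_def by simp
next
  case False
  have "f (g v) = v" if "v \<in> X" for v
    using assms(1) that unfolding homeomorphism_def by simp
  moreover have "nat (- k) = Suc (nat (- (k + 1)))" using False by simp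
  moreover have "iter_int f g (k + 1) w \<in> X" by (rule iter_int_in[OF assms])
  ultimately show ?thesis
    using False unfolding iter_int_def by (auto split: if_splits)
qed

lemma continuous_on_iter_int:
  assumes "homeomorphism X X f g"
  shows "continuous_on X (iter_int f g k)"
proof -
  have "continuous_on X (h ^^ n)" if "continuous_on X h" "h ` X \<subseteq> X" for h and n :: nat
  proof (induction n)
    case (Suc n)
    have "(h ^^ n) ` X \<subseteq> X"
      using that(2) by (induction n) auto
    then show ?case
      using Suc continuous_on_compose[of X "h ^^ n" h] continuous_on_subset[OF that(1)]
      by (simp add: o_def)
  qed (simp add: continuous_on_id)
  moreover have "continuous_on X f" "f ` X \<subseteq> X" "continuous_on X g" "g ` X \<subseteq> X"
    using assms unfolding homeomorphism_def by auto
  ultimately show ?thesis unfolding iter_int_def by simp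
qed

section \<open>L-shadowing implies shadowing\<close>

definition orbit_truncation :: "('a \<Rightarrow> 'a) \<Rightarrow> ('a \<Rightarrow> 'a) \<Rightarrow> nat \<Rightarrow> (int \<Rightarrow> 'a) \<Rightarrow> int \<Rightarrow> 'a" where
  "orbit_truncation f g M xs k =
     (if k > int M then iter_int f g (k - int M) (xs (int M))
      else if k < - int M then iter_int f g (k + int M) (xs (- int M))
      else xs k)"

lemma orbit_truncation_eq:
  "\<bar>k\<bar> \<le> int M \<Longrightarrow> orbit_truncation f g M xs k = xs k"
  unfolding orbit_truncation_def by auto

lemma orbit_truncation_upper:
  "k \<ge> int M \<Longrightarrow> orbit_truncation f g M xs k = iter_int f g (k - int M) (xs (int M))"
  unfolding orbit_truncation_def by auto

lemma orbit_truncation_lower: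
  "k \<le> - int M \<Longrightarrow> orbit_truncation f g M xs k = iter_int f g (k + int M) (xs (- int M))"
  unfolding orbit_truncation_def by auto

lemma orbit_truncation_in:
  assumes "homeomorphism X X f g" "range xs \<subseteq> X"
  shows "orbit_truncation f g M xs k \<in> X"
  unfolding orbit_truncation_def
  using iter_int_in[OF assms(1) range_subsetD[OF assms(2)]] assms(2) by auto

lemma orbit_truncation_exact_step:
  assumes "homeomorphism X X f g" "range xs \<subseteq> X" "k \<ge> int M \<or> k < - int M"
  shows "f (orbit_truncation f g M xs k) = orbit_truncation f g M xs (k + 1)"
proof -
  have Suc: "f (iter_int f g j (xs i)) = iter_int f g (j + 1) (xs i)" for i j
    using iter_int_Suc[OF assms(1)] assms(2) by (metis range_subsetD)
  from assms(3) show ?thesis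
  proof
    assume "k \<ge> int M"
    then show ?thesis
      using Suc[of "k - int M"] by (simp add: orbit_truncation_upper diff_add_eq)
  next
    assume "k < - int M"
    then show ?thesis
      using Suc[of "k + int M"] by (simp add: orbit_truncation_lower add.commute add.left_commute)
  qed
qed

lemma pseudo_orbit_orbit_truncation:
  assumes "homeomorphism X X f g" "pseudo_orbit X f \<delta> xs" "\<delta> > 0"
  shows "pseudo_orbit X f \<delta> (orbit_truncation f g M xs)"
proof -
  have xs: "range xs \<subseteq> X" "\<And>k. dist (f (xs k)) (xs (k + 1)) < \<delta>"
    using assms(2) unfolding pseudo_orbit_def by auto
  have "dist (f (orbit_truncation f g M xs k)) (orbit_truncation f g M xs (k + 1)) < \<delta>" for k
  proof (cases "k \<ge> int M \<or> k < - int M")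
    case True
    then show ?thesis using orbit_truncation_exact_step[OF assms(1) xs(1)] assms(3) by simp
  next
    case False
    then have "\<bar>k\<bar> \<le> int M" "\<bar>k + 1\<bar> \<le> int M" by auto
    then show ?thesis using orbit_truncation_eq[of _ M f g xs] xs(2)[of k] by simp
  qed
  then show ?thesis
    unfolding pseudo_orbit_def using orbit_truncation_in[OF assms(1) xs(1)] by blast
qed

lemma two_sided_limit_pseudo_orbit_orbit_truncation:
  assumes "homeomorphism X X f g" "range xs \<subseteq> X"
  shows "two_sided_limit_pseudo_orbit X f (orbit_truncation f g M xs)"
proof -
  let ?err = "\<lambda>k. dist (f (orbit_truncation f g M xs k)) (orbit_truncation f g M xs (k + 1))"
  have top: "eventually (\<lambda>k. ?err k = 0) at_top"
    using eventually_ge_at_top[of "int M"]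
    by eventually_elim (simp add: orbit_truncation_exact_step[OF assms])
  have bot: "eventually (\<lambda>k. ?err k = 0) at_bot"
    by (rule eventually_at_bot_linorderI[of "- int M - 1"])
      (simp add: orbit_truncation_exact_step[OF assms])
  show ?thesis
    unfolding two_sided_limit_pseudo_orbit_def
    using orbit_truncation_in[OF assms] tendsto_eventually[OF top] tendsto_eventually[OF bot]
    by simp
qed

lemma shadow_of_segment_shadows:
  assumes "compact X" "homeomorphism X X f g"
    and approx: "\<And>M::nat. \<exists>z\<in>X. \<forall>k. \<bar>k\<bar> \<le> int M \<longrightarrow> dist (iter_int f g k z) (xs k) \<le> \<epsilon>"
  obtains z where "z \<in> X" "\<And>k. dist (iter_int f g k z) (xs k) \<le> \<epsilon>"
proof -
  from approx have "\<forall>M. \<exists>z. z \<in> X \<and> (\<forall>k. \<bar>k\<bar> \<le> int M \<longrightarrow> dist (iter_int f g k z) (xs k) \<le> \<epsilon>)"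
    by blast
  then obtain zs where zs: "\<And>M. zs M \<in> X"
    "\<And>M k. \<bar>k\<bar> \<le> int M \<Longrightarrow> dist (iter_int f g k (zs M)) (xs k) \<le> \<epsilon>"
    by (rule choice[THEN exE]) blast
  obtain z r where z: "z \<in> X" and r: "strict_mono r" and lim: "(zs \<circ> r) \<longlonglongrightarrow> z"
    using compact_imp_seq_compact[OF assms(1)] zs(1) unfolding seq_compact_def by metis
  have "dist (iter_int f g k z) (xs k) \<le> \<epsilon>" for k
  proof (rule tendsto_upperbound)
    show "(\<lambda>j. dist (iter_int f g k ((zs \<circ> r) j)) (xs k)) \<longlonglongrightarrow> dist (iter_int f g k z) (xs k)"
      by (intro tendsto_dist tendsto_const continuous_on_tendsto_compose[OF
            continuous_on_iter_int[OF assms(2)] lim z]) (simp add: zs(1))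
    have "\<bar>k\<bar> \<le> int (r j)" if "nat \<bar>k\<bar> \<le> j" for j
      using that seq_suble[OF r, of j] by linarith
    then show "eventually (\<lambda>j. dist (iter_int f g k ((zs \<circ> r) j)) (xs k) \<le> \<epsilon>) sequentially"
      using zs(2) by (intro eventually_sequentiallyI[of "nat \<bar>k\<bar>"]) simp
  qed simp
  with z that show ?thesis by blast
qed

lemma shadowing_if_L_shadowing:
  assumes "compact X" "homeomorphism X X f g" "L_shadowing X f g"
  shows "shadowing X f g"
  unfolding shadowing_def
proof (intro allI impI)
  fix \<epsilon> :: real assume "\<epsilon> > 0"
  then obtain \<delta> where "\<delta> > 0" and L: "\<And>xs. pseudo_orbit X f \<delta> xs \<Longrightarrow>
      two_sided_limit_pseudo_orbit X f xs \<Longrightarrow> \<exists>z\<in>X. eps_shadows f g (\<epsilon>/2) z xs"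
    using assms(3) unfolding L_shadowing_def by (meson half_gt_zero)
  have "\<exists>z\<in>X. eps_shadows f g \<epsilon> z xs" if po: "pseudo_orbit X f \<delta> xs" for xs
  proof -
    have xs: "range xs \<subseteq> X" using po unfolding pseudo_orbit_def by blast
    have "\<exists>z\<in>X. \<forall>k. \<bar>k\<bar> \<le> int M \<longrightarrow> dist (iter_int f g k z) (xs k) \<le> \<epsilon>/2" for M
    proof -
      obtain z where "z \<in> X" and "eps_shadows f g (\<epsilon>/2) z (orbit_truncation f g M xs)"
        using L[OF pseudo_orbit_orbit_truncation[OF assms(2) po \<open>\<delta> > 0\<close>]
            two_sided_limit_pseudo_orbit_orbit_truncation[OF assms(2) xs]] by blast
      then have "dist (iter_int f g k z) (xs k) \<le> \<epsilon>/2" if "\<bar>k\<bar> \<le> int M" for k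
        unfolding eps_shadows_def using orbit_truncation_eq[OF that, of f g xs]
        by (metis less_imp_le)
      with \<open>z \<in> X\<close> show ?thesis by blast
    qed
    then obtain z where "z \<in> X" "\<And>k. dist (iter_int f g k z) (xs k) \<le> \<epsilon>/2"
      using shadow_of_segment_shadows[OF assms(1,2)] by blast
    moreover have "\<epsilon>/2 < \<epsilon>" using \<open>\<epsilon> > 0\<close> by simp
    ultimately show ?thesis
      unfolding eps_shadows_def by (meson le_less_trans)
  qed
  with \<open>\<delta> > 0\<close> show "\<exists>\<delta>>0. \<forall>xs. pseudo_orbit X f \<delta> xs \<longrightarrow> (\<exists>z\<in>X. eps_shadows f g \<epsilon> z xs)"
    by blast
qed

definition chain_reachable :: "'a::metric_space set \<Rightarrow> ('a \<Rightarrow> 'a) \<Rightarrow> 'a \<Rightarrow> 'a \<Rightarrow> bool" where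
  "chain_reachable X f x y \<longleftrightarrow>
     (\<forall>\<epsilon>>0. \<exists>p n. n > 0 \<and> finite_pseudo_orbit X f \<epsilon> p n \<and> p 0 = x \<and> p n = y)"

lemma finite_pseudo_orbit_append:
  assumes "finite_pseudo_orbit X f \<epsilon> p n" "finite_pseudo_orbit X f \<epsilon> q m" "p n = q 0"
  shows "finite_pseudo_orbit X f \<epsilon> (\<lambda>i. if i \<le> n then p i else q (i - n)) (n + m)"
  unfolding finite_pseudo_orbit_def
proof (intro conjI allI impI)
  fix i assume "i \<le> n + m"
  then show "(if i \<le> n then p i else q (i - n)) \<in> X"
    using assms(1,2) unfolding finite_pseudo_orbit_def by auto
next
  fix i assume i: "i < n + m"
  consider "i < n" | "i = n" | "i > n" by linarith
  then show "dist (f (if i \<le> n then p i else q (i - n)))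
      (if Suc i \<le> n then p (Suc i) else q (Suc i - n)) < \<epsilon>"
  proof cases
    case 3
    then have "i - n < m" "Suc i - n = Suc (i - n)" using i by auto
    with 3 show ?thesis using assms(2) unfolding finite_pseudo_orbit_def by auto
  qed (use assms i in \<open>auto simp: finite_pseudo_orbit_def\<close>)
qed

lemma chain_reachable_trans:
  assumes "chain_reachable X f x y" "chain_reachable X f y w"
  shows "chain_reachable X f x w"
  unfolding chain_reachable_def
proof (intro allI impI)
  fix \<epsilon> :: real assume "\<epsilon> > 0"
  obtain p n where "n > 0" "finite_pseudo_orbit X f \<epsilon> p n" "p 0 = x" "p n = y"
    using assms(1) \<open>\<epsilon> > 0\<close> unfolding chain_reachable_def by blast
  moreover obtain q m where "finite_pseudo_orbit X f \<epsilon> q m" "q 0 = y" "q m = w"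
    using assms(2) \<open>\<epsilon> > 0\<close> unfolding chain_reachable_def by blast
  ultimately show "\<exists>p n. n > 0 \<and> finite_pseudo_orbit X f \<epsilon> p n \<and> p 0 = x \<and> p n = w"
    using finite_pseudo_orbit_append[of X f \<epsilon> p n q m]
    by (intro exI[of _ "\<lambda>i. if i \<le> n then p i else q (i - n)"] exI[of _ "n + m"]) auto
qed

lemma chain_reachable_in:
  assumes "chain_reachable X f x y"
  shows "x \<in> X" "y \<in> X"
proof -
  obtain p n where "finite_pseudo_orbit X f 1 p n" "p 0 = x" "p n = y"
    using assms unfolding chain_reachable_def by (meson zero_less_one)
  then show "x \<in> X" "y \<in> X" unfolding finite_pseudo_orbit_def by auto
qed

lemma finite_pseudo_orbit_segment:
  assumes "pseudo_orbit X f \<epsilon> xs"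
  shows "finite_pseudo_orbit X f \<epsilon> (\<lambda>i. xs (a + int i)) n"
proof -
  have "dist (f (xs (a + int i))) (xs (a + int (Suc i))) < \<epsilon>" for i
  proof -
    have "dist (f (xs k)) (xs (k + 1)) < \<epsilon>" for k
      using assms unfolding pseudo_orbit_def by blast
    from this[of "a + int i"] show ?thesis by (simp add: ac_simps)
  qed
  then show ?thesis
    using assms unfolding pseudo_orbit_def finite_pseudo_orbit_def by blast
qed

lemma periodic_shift:
  assumes "\<And>k. xs (k + N) = xs k"
  shows "xs (k + N * int j) = xs k"
proof (induction j)
  case (Suc j)
  then show ?case using assms[of "k + N * int j"] by (simp add: algebra_simps)
qed simp

lemma periodic_pseudo_orbit_chain:
  assumes "periodic_pseudo_orbit X f \<epsilon> xs"
  shows "\<exists>p n. n > 0 \<and> finite_pseudo_orbit X f \<epsilon> p n \<and> p 0 = xs a \<and> p n = xs b"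
proof -
  obtain N where "N > 0" and N: "\<And>k. xs (k + N) = xs k"
    using assms unfolding periodic_pseudo_orbit_def by blast
  define b' where "b' = b + N * int (nat (\<bar>a - b\<bar> + 1))"
  have "\<bar>a - b\<bar> + 1 \<le> N * (\<bar>a - b\<bar> + 1)"
    using \<open>N > 0\<close> by (intro mult_le_cancel_right1[THEN iffD2]) auto
  moreover have "a - b \<le> \<bar>a - b\<bar>" by simp
  moreover have j: "int (nat (\<bar>a - b\<bar> + 1)) = \<bar>a - b\<bar> + 1" by simp
  ultimately have "b' > a" unfolding b'_def j by linarith
  moreover have "xs b' = xs b" unfolding b'_def by (rule periodic_shift) (rule N)
  moreover have "finite_pseudo_orbit X f \<epsilon> (\<lambda>i. xs (a + int i)) (nat (b' - a))"
    using assms unfolding periodic_pseudo_orbit_def by (blast intro: finite_pseudo_orbit_segment)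
  ultimately show ?thesis
    by (intro exI[of _ "\<lambda>i. xs (a + int i)"] exI[of _ "nat (b' - a)"]) auto
qed

lemma periodic_pseudo_orbit_of_loop:
  assumes "finite_pseudo_orbit X f \<epsilon> r L" "L > 0" "r L = r 0"
  shows "periodic_pseudo_orbit X f \<epsilon> (\<lambda>k. r (nat (k mod int L)))"
proof -
  define xs where "xs k = r (nat (k mod int L))" for k
  have "xs k \<in> X \<and> dist (f (xs k)) (xs (k + 1)) < \<epsilon>" for k
  proof -
    define i where "i = nat (k mod int L)"
    have ki: "int i = k mod int L" unfolding i_def using \<open>L > 0\<close> by simp
    have "int i < int L" unfolding ki using \<open>L > 0\<close> by simp
    then have "i < L" by simp
    have next_mod: "(k + 1) mod int L = (int i + 1) mod int L"
      by (simp only: ki mod_add_left_eq)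
    have "xs (k + 1) = r (Suc i)"
    proof (cases "Suc i = L")
      case True
      then have "int i + 1 = int L" by simp
      then have "(k + 1) mod int L = 0" unfolding next_mod by simp
      then show ?thesis unfolding xs_def using True assms(3) by simp
    next
      case False
      then have "(k + 1) mod int L = int i + 1"
        unfolding next_mod using \<open>i < L\<close> by (intro mod_pos_pos_trivial) auto
      then show ?thesis unfolding xs_def by (simp add: nat_add_distrib)
    qed
    moreover have "xs k = r i" unfolding xs_def i_def ..
    ultimately show ?thesis
      using assms(1) \<open>i < L\<close> unfolding finite_pseudo_orbit_def by simp
  qed
  moreover have "xs (k + int L) = xs k" for k unfolding xs_def by simp
  ultimately show ?thesis
    unfolding periodic_pseudo_orbit_def pseudo_orbit_def xs_def[symmetric] using \<open>L > 0\<close>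
    by (metis of_nat_0_less_iff)
qed

lemma chain_class_eq_mutually_reachable:
  "chain_class X f x = {y. chain_reachable X f x y \<and> chain_reachable X f y x}"
proof (intro equalityI subsetI)
  fix y assume y: "y \<in> chain_class X f x"
  have "chain_reachable X f x y \<and> chain_reachable X f y x"
    unfolding chain_reachable_def
  proof (intro conjI allI impI)
    fix \<epsilon> :: real assume "\<epsilon> > 0"
    then obtain xs a b where "periodic_pseudo_orbit X f \<epsilon> xs" "x = xs a" "y = xs b"
      using y unfolding chain_class_def by blast
    then show "\<exists>p n. n > 0 \<and> finite_pseudo_orbit X f \<epsilon> p n \<and> p 0 = x \<and> p n = y"
      and "\<exists>p n. n > 0 \<and> finite_pseudo_orbit X f \<epsilon> p n \<and> p 0 = y \<and> p n = x"
      using periodic_pseudo_orbit_chain by simp_all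
  qed
  then show "y \<in> {y. chain_reachable X f x y \<and> chain_reachable X f y x}" by simp
next
  fix y assume "y \<in> {y. chain_reachable X f x y \<and> chain_reachable X f y x}"
  then have xy: "chain_reachable X f x y" and yx: "chain_reachable X f y x" by auto
  have "\<exists>xs. periodic_pseudo_orbit X f \<epsilon> xs \<and> x \<in> range xs \<and> y \<in> range xs" if "\<epsilon> > 0" for \<epsilon>
  proof -
    obtain p n q m where p: "n > 0" "finite_pseudo_orbit X f \<epsilon> p n" "p 0 = x" "p n = y"
      and q: "m > 0" "finite_pseudo_orbit X f \<epsilon> q m" "q 0 = y" "q m = x"
      using xy yx \<open>\<epsilon> > 0\<close> unfolding chain_reachable_def by meson
    define r where "r i = (if i \<le> n then p i else q (i - n))" for i
    have "finite_pseudo_orbit X f \<epsilon> r (n + m)"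
      unfolding r_def using finite_pseudo_orbit_append[OF p(2) q(2)] p(4) q(3) by simp
    moreover have "n + m > 0" using q(1) by simp
    moreover have "r (n + m) = r 0" "r 0 = x" "r n = y" unfolding r_def using p q by auto
    ultimately have "periodic_pseudo_orbit X f \<epsilon> (\<lambda>k. r (nat (k mod int (n + m))))"
      by (intro periodic_pseudo_orbit_of_loop)
    moreover have "x = r (nat (0 mod int (n + m)))" "y = r (nat (int n mod int (n + m)))"
      using \<open>r 0 = x\<close> \<open>r n = y\<close> q(1) by simp_all
    ultimately show ?thesis by (blast intro: range_eqI)
  qed
  then show "y \<in> chain_class X f x"
    unfolding chain_class_def using chain_reachable_in(2)[OF xy] by blast
qed

lemma chain_class_eq_if_mutually_reachable:
  assumes "chain_reachable X f x y" "chain_reachable X f y x"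
  shows "chain_class X f x = chain_class X f y"
  unfolding chain_class_eq_mutually_reachable
  using chain_reachable_trans[OF assms(2)] chain_reachable_trans[OF assms(1)]
    chain_reachable_trans[OF _ assms(1)] chain_reachable_trans[OF _ assms(2)]
  by blast

section \<open>Concatenating infinitely many chain loops\<close>

(* block_pos n N = (m, i): step N of the concatenation of loops of lengths n 0, n 1, ...
   is step i of loop m. *)
fun block_pos :: "(nat \<Rightarrow> nat) \<Rightarrow> nat \<Rightarrow> nat \<times> nat" where
  "block_pos n 0 = (0, 0)"
| "block_pos n (Suc N) =
     (case block_pos n N of (m, i) \<Rightarrow> if Suc i < n m then (m, Suc i) else (Suc m, 0))"

definition concat_loops :: "(nat \<Rightarrow> nat \<Rightarrow> 'a) \<Rightarrow> (nat \<Rightarrow> nat) \<Rightarrow> nat \<Rightarrow> 'a" where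
  "concat_loops P n N = (case block_pos n N of (m, i) \<Rightarrow> P m i)"

context
  fixes n :: "nat \<Rightarrow> nat"
  assumes n_pos: "\<And>m. 0 < n m"
begin

lemma block_pos_less: "block_pos n N = (m, i) \<Longrightarrow> i < n m"
proof (induction N arbitrary: m i)
  case 0 then show ?case using n_pos by simp
next
  case (Suc N) then show ?case using n_pos by (auto split: prod.splits if_splits)
qed

lemma block_pos_sum: "block_pos n (sum n {..<m}) = (m, 0)"
proof (induction m)
  case (Suc m)
  have inner: "block_pos n (sum n {..<m} + i) = (m, i)" if "i < n m" for i
    using that by (induction i) (auto simp: Suc.IH)
  have "n m - 1 < n m" using n_pos[of m] by simp
  then have "block_pos n (Suc (sum n {..<m} + (n m - 1))) = (Suc m, 0)"
    using n_pos[of m] by (simp only: block_pos.simps(2) inner) simp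
  moreover have "sum n {..<Suc m} = Suc (sum n {..<m} + (n m - 1))"
    using n_pos[of m] by simp
  ultimately show ?case by (simp only:)
qed simp

lemma filterlim_block_pos: "filterlim (\<lambda>N. fst (block_pos n N)) at_top sequentially"
proof -
  have "mono (\<lambda>N. fst (block_pos n N))"
    by (rule incseq_SucI) (auto split: prod.splits)
  then have "m \<le> fst (block_pos n N)" if "sum n {..<m} \<le> N" for m N
    using that block_pos_sum[of m] by (metis fst_conv monoD)
  then show ?thesis
    unfolding filterlim_at_top using eventually_sequentiallyI by meson
qed

lemma concat_loops_sum:
  assumes "\<And>m. P m 0 = a"
  shows "concat_loops P n (sum n {..<m}) = a"
  unfolding concat_loops_def block_pos_sum using assms by simp

lemma concat_loops_step:
  assumes "\<And>m. P m 0 = a" "\<And>m. P m (n m) = a" "block_pos n N = (m, i)"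
  shows "concat_loops P n N = P m i" "concat_loops P n (Suc N) = P m (Suc i)"
proof -
  show "concat_loops P n N = P m i" unfolding concat_loops_def using assms(3) by simp
  have "i < n m" by (rule block_pos_less[OF assms(3)])
  then have "Suc i = n m" if "\<not> Suc i < n m" using that by simp
  then show "concat_loops P n (Suc N) = P m (Suc i)"
    unfolding concat_loops_def using assms by auto
qed

end

(* The step error d is dist (f p) q for forward chains and dist (f q) p for backward ones. *)
lemma limit_chain_of_loops:
  fixes d :: "'a \<Rightarrow> 'a \<Rightarrow> real"
  assumes loops: "\<And>\<epsilon>. \<epsilon> > 0 \<Longrightarrow> \<exists>p n. n > 0 \<and> (\<forall>i\<le>n. p i \<in> X) \<and>
      (\<forall>i<n. d (p i) (p (Suc i)) < \<epsilon>) \<and> p 0 = x \<and> p n = x"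
    and "c > 0" and d_nonneg: "\<And>p q. 0 \<le> d p q"
  obtains u where "u 0 = x" "\<And>N. u N \<in> X" "\<And>N. d (u N) (u (Suc N)) < c"
    "(\<lambda>N. d (u N) (u (Suc N))) \<longlonglongrightarrow> 0" "\<And>M. \<exists>N\<ge>M. u N = x"
proof -
  define e where "e m = c / real (Suc m)" for m
  have "e m > 0" "e m \<le> c" for m
    unfolding e_def using \<open>c > 0\<close> by (simp_all add: divide_le_eq)
  have "e \<longlonglongrightarrow> 0"
    unfolding e_def by (intro lim_const_over_n[THEN LIMSEQ_Suc])
  obtain P n where n: "\<And>m. n m > 0" and PX: "\<And>m i. i \<le> n m \<Longrightarrow> P m i \<in> X"
    and Pd: "\<And>m i. i < n m \<Longrightarrow> d (P m i) (P m (Suc i)) < e m"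
    and P0: "\<And>m. P m 0 = x" and Pn: "\<And>m. P m (n m) = x"
    using loops[OF \<open>\<And>m. e m > 0\<close>] by metis
  define u where "u = concat_loops P n"
  have u_step: "u N \<in> X \<and> d (u N) (u (Suc N)) < e (fst (block_pos n N))" for N
  proof -
    obtain m i where mi: "block_pos n N = (m, i)" by fastforce
    have "i < n m" using block_pos_less[where n = n, OF n mi] .
    moreover have "u N = P m i" "u (Suc N) = P m (Suc i)"
      using concat_loops_step[where n = n and P = P, OF n P0 Pn mi] unfolding u_def by simp_all
    ultimately show ?thesis using PX Pd mi by simp
  qed
  show ?thesis
  proof
    show "u 0 = x" unfolding u_def concat_loops_def using P0 by simp
    show "u N \<in> X" "d (u N) (u (Suc N)) < c" for N
      using u_step[of N] \<open>\<And>m. e m \<le> c\<close> by (auto intro: less_le_trans)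
    show "(\<lambda>N. d (u N) (u (Suc N))) \<longlonglongrightarrow> 0"
    proof (rule tendsto_sandwich[OF _ _ tendsto_const])
      show "eventually (\<lambda>N. d (u N) (u (Suc N)) \<le> e (fst (block_pos n N))) sequentially"
        using u_step by (simp add: less_imp_le)
      show "(\<lambda>N. e (fst (block_pos n N))) \<longlonglongrightarrow> 0"
        by (rule filterlim_compose[OF \<open>e \<longlonglongrightarrow> 0\<close> filterlim_block_pos[OF n]])
    qed (simp add: d_nonneg)
    show "\<exists>N\<ge>M. u N = x" for M
    proof (intro exI conjI)
      show "M \<le> sum n {..<M}"
      proof (induction M)
        case (Suc M) then show ?case using n[of M] by simp
      qed simp
      show "u (sum n {..<M}) = x"
        unfolding u_def by (rule concat_loops_sum[where n = n and P = P, OF n P0])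
    qed
  qed
qed

lemma chain_recurrent_forward_limit_chain:
  assumes "chain_recurrent X f x" "c > 0"
  obtains u where "u 0 = x" "\<And>N. u N \<in> X" "\<And>N. dist (f (u N)) (u (Suc N)) < c"
    "(\<lambda>N. dist (f (u N)) (u (Suc N))) \<longlonglongrightarrow> 0" "\<And>M. \<exists>N\<ge>M. u N = x"
  using limit_chain_of_loops[of X "\<lambda>p q. dist (f p) q" x c] assms
  unfolding chain_recurrent_def finite_pseudo_orbit_def by auto

lemma chain_recurrent_backward_limit_chain:
  assumes "chain_recurrent X f x" "c > 0"
  obtains v where "v 0 = x" "\<And>N. v N \<in> X" "\<And>N. dist (f (v (Suc N))) (v N) < c"
    "(\<lambda>N. dist (f (v (Suc N))) (v N)) \<longlonglongrightarrow> 0" "\<And>M. \<exists>N\<ge>M. v N = x"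
proof (rule limit_chain_of_loops[of X "\<lambda>p q. dist (f q) p" x c])
  fix \<epsilon> :: real assume "\<epsilon> > 0"
  then obtain p n where "n > 0" "finite_pseudo_orbit X f \<epsilon> p n" "p 0 = x" "p n = x"
    using assms(1) unfolding chain_recurrent_def by blast
  moreover have "dist (f (p (n - Suc i))) (p (n - i)) < \<epsilon>" if "i < n" for i
  proof -
    have "n - Suc i < n" "Suc (n - Suc i) = n - i" using that by auto
    then show ?thesis using \<open>finite_pseudo_orbit X f \<epsilon> p n\<close>
      unfolding finite_pseudo_orbit_def by metis
  qed
  ultimately show "\<exists>p n. n > 0 \<and> (\<forall>i\<le>n. p i \<in> X) \<and>
      (\<forall>i<n. dist (f (p (Suc i))) (p i) < \<epsilon>) \<and> p 0 = x \<and> p n = x"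
    unfolding finite_pseudo_orbit_def
    by (intro exI[of _ "\<lambda>i. p (n - i)"] exI[of _ n]) auto
qed (use assms that in auto)

section \<open>Finitely many chain recurrent classes\<close>

lemma chain_reachable_if_limit_shadows:
  assumes hom: "homeomorphism X X f g" and "z \<in> X" "x \<in> X" "y \<in> X"
    and lim: "limit_shadows f g z xs"
    and past: "\<And>K. \<exists>s\<le>K. xs s = x" and future: "\<And>K. \<exists>t\<ge>K. xs t = y"
  shows "chain_reachable X f x y"
  unfolding chain_reachable_def
proof (intro allI impI)
  fix \<eta> :: real assume "\<eta> > 0"
  have "continuous_on X f" using hom unfolding homeomorphism_def by simp
  then obtain \<rho> where "\<rho> > 0" and \<rho>: "\<And>w. w \<in> X \<Longrightarrow> dist w x < \<rho> \<Longrightarrow> dist (f w) (f x) < \<eta>"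
    using \<open>x \<in> X\<close> \<open>\<eta> > 0\<close> unfolding continuous_on_iff by metis
  have "eventually (\<lambda>k. dist (iter_int f g k z) (xs k) < \<rho>) at_bot"
    using lim \<open>\<rho> > 0\<close> unfolding limit_shadows_def by (blast dest: order_tendstoD(2))
  then obtain K1 where K1: "\<And>k. k \<le> K1 \<Longrightarrow> dist (iter_int f g k z) (xs k) < \<rho>"
    unfolding eventually_at_bot_linorder by blast
  have "eventually (\<lambda>k. dist (iter_int f g k z) (xs k) < \<eta>) at_top"
    using lim \<open>\<eta> > 0\<close> unfolding limit_shadows_def by (blast dest: order_tendstoD(2))
  then obtain K2 where K2: "\<And>k. k \<ge> K2 \<Longrightarrow> dist (iter_int f g k z) (xs k) < \<eta>"
    unfolding eventually_at_top_linorder by blast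
  obtain s where "s \<le> K1" "xs s = x" using past by blast
  \<comment> \<open>\<open>t \<ge> s + 2\<close> keeps the two perturbed steps (at x and at y) of the chain apart.\<close>
  obtain t where "t \<ge> max K2 (s + 2)" "xs t = y" using future by blast
  define n where "n = nat (t - s)"
  have n: "n \<ge> 2" "int n = t - s" unfolding n_def using \<open>t \<ge> max K2 (s + 2)\<close> by auto
  define p where "p i = (if i = 0 then x else if i = n then y else iter_int f g (s + int i) z)" for i
  have orbit: "f (iter_int f g k z) = iter_int f g (k + 1) z" for k
    using iter_int_Suc[OF hom \<open>z \<in> X\<close>] by simp
  have "dist (f (p i)) (p (Suc i)) < \<eta>" if "i < n" for i
  proof -
    consider "i = 0" | "0 < i" "Suc i < n" | "Suc i = n" using \<open>i < n\<close> by linarith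
    then show ?thesis
    proof cases
      case 1
      have "dist (iter_int f g s z) x < \<rho>" using K1[OF \<open>s \<le> K1\<close>] \<open>xs s = x\<close> by simp
      then have "dist (f (iter_int f g s z)) (f x) < \<eta>" using \<rho> iter_int_in[OF hom \<open>z \<in> X\<close>] by blast
      then show ?thesis using 1 n orbit[of s] unfolding p_def by (simp add: dist_commute)
    next
      case 2
      then show ?thesis using orbit[of "s + int i"] \<open>\<eta> > 0\<close> unfolding p_def by (simp add: ac_simps)
    next
      case 3
      then have "s + int i + 1 = t" "i \<noteq> 0" using n by auto
      then show ?thesis
        using 3 K2[of t] \<open>t \<ge> max K2 (s + 2)\<close> \<open>xs t = y\<close> orbit[of "s + int i"] unfolding p_def by simp
    qed
  qed
  moreover have "p i \<in> X" for i
    unfolding p_def using \<open>x \<in> X\<close> \<open>y \<in> X\<close> iter_int_in[OF hom \<open>z \<in> X\<close>] by simp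
  moreover have "p 0 = x" "p n = y" "n > 0" unfolding p_def using n by auto
  ultimately show "\<exists>p n. n > 0 \<and> finite_pseudo_orbit X f \<eta> p n \<and> p 0 = x \<and> p n = y"
    unfolding finite_pseudo_orbit_def by blast
qed

lemma filterlim_nat_diff_at_bot: "filterlim (\<lambda>k::int. nat (- k - c)) sequentially at_bot"
  unfolding filterlim_at_top
proof
  fix Z :: nat
  show "eventually (\<lambda>k. Z \<le> nat (- k - c)) at_bot"
    by (rule eventually_at_bot_linorderI[of "- c - int Z"]) linarith
qed

lemma chain_reachable_if_close:
  assumes hom: "homeomorphism X X f g" and "\<delta> > 0"
    and L: "\<And>xs. pseudo_orbit X f \<delta> xs \<Longrightarrow> two_sided_limit_pseudo_orbit X f xs \<Longrightarrow>
      \<exists>z\<in>X. limit_shadows f g z xs"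
    and x: "chain_recurrent X f x" and y: "chain_recurrent X f y" and "dist x y < \<delta>/2"
  shows "chain_reachable X f x y"
proof -
  obtain v where v: "v 0 = x" "\<And>N. v N \<in> X" "\<And>N. dist (f (v (Suc N))) (v N) < \<delta>/2"
    "(\<lambda>N. dist (f (v (Suc N))) (v N)) \<longlonglongrightarrow> 0" "\<And>M. \<exists>N\<ge>M. v N = x"
    using chain_recurrent_backward_limit_chain[OF x, of "\<delta>/2"] \<open>\<delta> > 0\<close> by auto
  obtain u where u: "u 0 = y" "\<And>N. u N \<in> X" "\<And>N. dist (f (u N)) (u (Suc N)) < \<delta>/2"
    "(\<lambda>N. dist (f (u N)) (u (Suc N))) \<longlonglongrightarrow> 0" "\<And>M. \<exists>N\<ge>M. u N = y"
    using chain_recurrent_forward_limit_chain[OF y, of "\<delta>/2"] \<open>\<delta> > 0\<close> by auto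
  define xs where "xs k = (if k \<ge> 0 then u (nat k) else v (nat (- k)))" for k
  have xsX: "range xs \<subseteq> X" unfolding xs_def using u(2) v(2) by auto
  have step_future: "dist (f (xs k)) (xs (k + 1)) = dist (f (u (nat k))) (u (Suc (nat k)))"
    if "k \<ge> 0" for k
    using that unfolding xs_def by (simp add: nat_add_distrib)
  have step_past: "dist (f (xs k)) (xs (k + 1)) = dist (f (v (Suc (nat (- k - 1))))) (v (nat (- k - 1)))"
    if "k \<le> - 2" for k
  proof -
    have "nat (- k) = Suc (nat (- k - 1))" using that by simp
    then show ?thesis using that unfolding xs_def by simp
  qed
  have "dist (f (xs (- 1))) (xs 0) \<le> dist (f (v (Suc 0))) (v 0) + dist x y"
    unfolding xs_def using u(1) v(1) dist_triangle by simp
  also have "\<dots> < \<delta>" using v(3)[of 0] \<open>dist x y < \<delta>/2\<close> by simp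
  finally have step_junction: "dist (f (xs (- 1))) (xs (- 1 + 1)) < \<delta>" by simp
  have "dist (f (xs k)) (xs (k + 1)) < \<delta>" for k
  proof -
    have "\<delta>/2 < \<delta>" using \<open>\<delta> > 0\<close> by simp
    consider "k \<ge> 0" | "k = - 1" | "k \<le> - 2" by linarith
    then show ?thesis
    proof cases
      case 1
      then show ?thesis using step_future u(3) \<open>\<delta>/2 < \<delta>\<close> by (metis less_trans)
    next
      case 2
      then show ?thesis using step_junction by simp
    next
      case 3
      then show ?thesis using step_past v(3) \<open>\<delta>/2 < \<delta>\<close> by (metis less_trans)
    qed
  qed
  then have "pseudo_orbit X f \<delta> xs"
    unfolding pseudo_orbit_def using xsX by blast
  moreover have "two_sided_limit_pseudo_orbit X f xs"
    unfolding two_sided_limit_pseudo_orbit_def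
  proof (intro conjI allI)
    show "xs k \<in> X" for k using xsX by blast
    have "eventually (\<lambda>k. dist (f (u (nat k))) (u (Suc (nat k))) = dist (f (xs k)) (xs (k + 1))) at_top"
      using eventually_ge_at_top[of 0] by eventually_elim (simp add: step_future)
    then show "((\<lambda>k. dist (f (xs k)) (xs (k + 1))) \<longlongrightarrow> 0) at_top"
      using filterlim_compose[OF u(4) filterlim_nat_sequentially] by (rule tendsto_cong[THEN iffD1])
    have "eventually (\<lambda>k. dist (f (v (Suc (nat (- k - 1))))) (v (nat (- k - 1))) =
        dist (f (xs k)) (xs (k + 1))) at_bot"
      by (rule eventually_at_bot_linorderI[of "- 2"]) (simp add: step_past)
    then show "((\<lambda>k. dist (f (xs k)) (xs (k + 1))) \<longlongrightarrow> 0) at_bot"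
      using filterlim_compose[OF v(4) filterlim_nat_diff_at_bot] by (rule tendsto_cong[THEN iffD1])
  qed
  ultimately obtain z where "z \<in> X" "limit_shadows f g z xs" using L by blast
  moreover have "\<exists>s\<le>K. xs s = x" for K
  proof -
    obtain N where "N \<ge> max 1 (nat (- K))" "v N = x" using v(5) by blast
    then show ?thesis unfolding xs_def by (intro exI[of _ "- int N"]) auto
  qed
  moreover have "\<exists>t\<ge>K. xs t = y" for K
  proof -
    obtain N where "N \<ge> nat K" "u N = y" using u(5) by blast
    then show ?thesis unfolding xs_def by (intro exI[of _ "int N"]) auto
  qed
  ultimately show ?thesis
    using chain_reachable_if_limit_shadows[OF hom] x y unfolding chain_recurrent_def by blast
qed

lemma chain_class_locally_constant:
  assumes "homeomorphism X X f g" "L_shadowing X f g"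
  obtains \<delta> where "\<delta> > 0" "\<And>x y. chain_recurrent X f x \<Longrightarrow> chain_recurrent X f y \<Longrightarrow>
      dist x y < \<delta> \<Longrightarrow> chain_class X f x = chain_class X f y"
proof -
  obtain \<delta> where "\<delta> > 0" and "\<forall>xs. pseudo_orbit X f \<delta> xs \<and> two_sided_limit_pseudo_orbit X f xs \<longrightarrow>
      (\<exists>z\<in>X. eps_shadows f g 1 z xs \<and> limit_shadows f g z xs)"
    using assms(2)[unfolded L_shadowing_def, rule_format, of 1] by auto
  then have L: "\<And>xs. pseudo_orbit X f \<delta> xs \<Longrightarrow> two_sided_limit_pseudo_orbit X f xs \<Longrightarrow>
      \<exists>z\<in>X. limit_shadows f g z xs"
    by blast
  show ?thesis
  proof (rule that)
    show "\<delta>/2 > 0" using \<open>\<delta> > 0\<close> by simp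
    fix x y
    assume x: "chain_recurrent X f x" and y: "chain_recurrent X f y" and "dist x y < \<delta>/2"
    then have "dist y x < \<delta>/2" by (simp add: dist_commute)
    show "chain_class X f x = chain_class X f y"
    proof (rule chain_class_eq_if_mutually_reachable)
      show "chain_reachable X f x y"
        by (rule chain_reachable_if_close[OF assms(1) \<open>\<delta> > 0\<close> L x y \<open>dist x y < \<delta>/2\<close>])
      show "chain_reachable X f y x"
        by (rule chain_reachable_if_close[OF assms(1) \<open>\<delta> > 0\<close> L y x \<open>dist y x < \<delta>/2\<close>])
    qed
  qed
qed

lemma finite_image_if_locally_constant:
  assumes "compact X" "S \<subseteq> X" "\<delta> > 0"
    and F: "\<And>x y. x \<in> S \<Longrightarrow> y \<in> S \<Longrightarrow> dist x y < \<delta> \<Longrightarrow> F x = F y"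
  shows "finite (F ` S)"
proof -
  obtain K where "finite K" and cover: "X \<subseteq> (\<Union>c\<in>K. ball c (\<delta>/2))"
  proof (rule compactE_image[OF assms(1), of X "\<lambda>c. ball c (\<delta>/2)"])
    show "open (ball c (\<delta>/2))" for c by simp
    show "X \<subseteq> (\<Union>c\<in>X. ball c (\<delta>/2))" using \<open>\<delta> > 0\<close> by auto
  qed (rule that)
  have "finite (F ` (S \<inter> ball c (\<delta>/2)))" for c
  proof (cases "S \<inter> ball c (\<delta>/2) = {}")
    case False
    then obtain w where w: "w \<in> S" "dist c w < \<delta>/2" by auto
    have "F ` (S \<inter> ball c (\<delta>/2)) \<subseteq> {F w}"
    proof
      fix v assume "v \<in> F ` (S \<inter> ball c (\<delta>/2))"
      then obtain x where x: "x \<in> S" "dist c x < \<delta>/2" "v = F x" by auto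
      have "dist x w \<le> dist c x + dist c w" by (rule dist_triangle3)
      also have "\<dots> < \<delta>" using x(2) w(2) by simp
      finally show "v \<in> {F w}" using F[OF x(1) w(1)] x(3) by simp
    qed
    then show ?thesis by (rule finite_subset) simp
  qed simp
  moreover have "F ` S \<subseteq> (\<Union>c\<in>K. F ` (S \<inter> ball c (\<delta>/2)))"
  proof
    fix v assume "v \<in> F ` S"
    then obtain x where "x \<in> S" "v = F x" by blast
    moreover obtain c where "c \<in> K" "x \<in> ball c (\<delta>/2)" using cover \<open>x \<in> S\<close> assms(2) by blast
    ultimately show "v \<in> (\<Union>c\<in>K. F ` (S \<inter> ball c (\<delta>/2)))" by blast
  qed
  ultimately show ?thesis using \<open>finite K\<close> by (meson finite_UN_I finite_subset)
qed

theorem proposition3p1: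
  fixes X :: "'a::metric_space set" and f g :: "'a \<Rightarrow> 'a"
  assumes "compact X"
    and "homeomorphism X X f g"
    and "L_shadowing X f g"
  shows "shadowing X f g \<and> finite (chain_recurrent_classes X f)"
proof
  show "shadowing X f g" by (rule shadowing_if_L_shadowing[OF assms])
  obtain \<delta> where "\<delta> > 0" and close: "\<And>x y. chain_recurrent X f x \<Longrightarrow> chain_recurrent X f y \<Longrightarrow>
      dist x y < \<delta> \<Longrightarrow> chain_class X f x = chain_class X f y"
    using chain_class_locally_constant[OF assms(2,3)] by metis
  have "{x. chain_recurrent X f x} \<subseteq> X" unfolding chain_recurrent_def by blast
  then show "finite (chain_recurrent_classes X f)"
    unfolding chain_recurrent_classes_def
    by (rule finite_image_if_locally_constant[OF assms(1) _ \<open>\<delta> > 0\<close> close]) simp_all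
qed

end
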